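(* In the setting where $\alpha\in(0,1)$ and $\lambda_1,\dots,\lambda_r\in\mathbb{C}$ are distinct with multiplicities $n_1,\dots,n_r\ge1$, consider $$({}^LD^\alpha-\lambda_1)^{n_1}\circ\cdots\circ({}^LD^\alpha-\lambda_r)^{n_r}x(t)=\sum_{j=0}^J\beta_jt^j\mathcal{E}_\alpha^{(j)}(\mu t),$$ with $\beta_j,\mu\in\mathbb{C}$, $J\ge0$, and any initial values $x(0),{}^LD^\alpha x(0),\dots,{}^LD^{(m-1)\circ\alpha}x(0)$, $m=n_1+\dots+n_r$. If $\mu\neq\lambda_l$ for all $l$, the solution $x$ lies in the span of $\mathcal{B}\cup\{t^j\mathcal{E}_\alpha^{(j)}(\mu t):j=0,\dots,J\}$. If $\mu=\lambda_{l_0}$ for some $l_0$, then $x$ lies in the span of $\big(\bigcup_{l\neq l_0}\mathcal{B}_{\lambda_l,n_l}\big)\cup\{t^k\mathcal{E}_\alpha^{(k)}(\lambda_{l_0}t):k=0,\dots,J+n_{l_0}\}$.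
   Context: $\mathcal{E}_\alpha(s)=\sum_{n=0}^\infty\frac{s^n}{\Gamma(2-\alpha)^n\prod_{j=1}^n\frac{\Gamma(j+1)}{\Gamma(j+1-\alpha)}}$ (entire), $\mathcal{E}_\alpha^{(k)}$ its $k$-th ordinary derivative. $\mathcal{B}_{\lambda_l,n_l}=\{t^k\mathcal{E}_\alpha^{(k)}(\lambda_lt):k=0,\dots,n_l-1\}$ and $\mathcal{B}=\bigcup_l\mathcal{B}_{\lambda_l,n_l}$. Solutions are taken among functions on $[0,\infty)$ given by everywhere convergent power series, with the equation holding for all $t\ge0$. ${}^LD^\alpha x(t)=\frac{\Gamma(2-\alpha)}{t^{1-\alpha}}\cdot\frac{1}{\Gamma(1-\alpha)}\int_0^t (t-\tau)^{-\alpha}x'(\tau)d\tau$ for $t>0$, acting termwise on power series: ${}^LD^\alpha\sum_nx_nt^n=\sum_nx_{n+1}\frac{\Gamma(n+2)\Gamma(2-\alpha)}{\Gamma(n+2-\alpha)}t^n$ (also defining the value at $t=0$). ${}^LD^{k\circ\alpha}$ and $({}^LD^\alpha-\lambda)^k$ denote $k$-fold compositions. *)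

theory Defs
  imports "HOL-Analysis.Analysis"
begin

definition Ecoef :: "real \<Rightarrow> nat \<Rightarrow> real" where
  "Ecoef \<alpha> n = 1 / (Gamma (2 - \<alpha>) ^ n *
      (\<Prod>j\<in>{1..n}. Gamma (real j + 1) / Gamma (real j + 1 - \<alpha>)))"

definition Ealpha :: "real \<Rightarrow> complex \<Rightarrow> complex" where
  "Ealpha \<alpha> s = (\<Sum>n. complex_of_real (Ecoef \<alpha> n) * s ^ n)"

definition Ealpha_deriv :: "real \<Rightarrow> nat \<Rightarrow> complex \<Rightarrow> complex" where
  "Ealpha_deriv \<alpha> k = (deriv ^^ k) (Ealpha \<alpha>)"

text \<open>Functions on [0,oo) given by everywhere convergent power series,
  represented by their coefficient sequence.\<close>
definition ps_fun :: "(nat \<Rightarrow> complex) \<Rightarrow> real \<Rightarrow> complex" where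
  "ps_fun c t = (\<Sum>n. c n * complex_of_real t ^ n)"

definition ps_conv :: "(nat \<Rightarrow> complex) \<Rightarrow> bool" where
  "ps_conv c \<longleftrightarrow> (\<forall>t\<ge>0. summable (\<lambda>n. c n * complex_of_real t ^ n))"

definition LD :: "real \<Rightarrow> (nat \<Rightarrow> complex) \<Rightarrow> (nat \<Rightarrow> complex)" where
  "LD \<alpha> c n = c (Suc n) *
     complex_of_real (Gamma (real n + 2) * Gamma (2 - \<alpha>) / Gamma (real n + 2 - \<alpha>))"

definition LD_shift :: "real \<Rightarrow> complex \<Rightarrow> (nat \<Rightarrow> complex) \<Rightarrow> (nat \<Rightarrow> complex)" where
  "LD_shift \<alpha> z c = (\<lambda>n. LD \<alpha> c n - z * c n)"

definition LD_poly :: "real \<Rightarrow> (nat \<Rightarrow> complex) \<Rightarrow> (nat \<Rightarrow> nat) \<Rightarrow> nat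
    \<Rightarrow> (nat \<Rightarrow> complex) \<Rightarrow> (nat \<Rightarrow> complex)" where
  "LD_poly \<alpha> lam mul r =
     foldr (\<lambda>l acc. (LD_shift \<alpha> (lam l) ^^ mul l) \<circ> acc) [0..<r] id"

end

theory Submission
  imports Defs
begin

text \<open>Write the unknown power series as \<open>x(t) = \<Sum>\<^sub>n e\<^sub>n d\<^sub>n t\<^sup>n\<close>, where \<open>e\<^sub>n\<close> are the Taylor
  coefficients of \<open>E\<^sub>\<alpha>\<close>. The coefficient of \<open>t\<^sup>n\<close> in \<open>LD\<^sup>\<alpha> x\<close> is \<open>x\<^sub>n\<^sub>+\<^sub>1 e\<^sub>n / e\<^sub>n\<^sub>+\<^sub>1\<close>, so
  \<open>LD\<^sup>\<alpha> - \<lambda>\<close> becomes the difference operator \<open>d\<^sub>n \<mapsto> d\<^sub>n\<^sub>+\<^sub>1 - \<lambda> d\<^sub>n\<close> on \<open>d\<close>, and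
  \<open>t\<^sup>k E\<^sub>\<alpha>\<^sup>(\<^sup>k\<^sup>)(v t)\<close> corresponds to \<open>d\<^sub>n = (\<partial>/\<partial>v)\<^sup>k v\<^sup>n\<close>. By uniqueness of power series
  coefficients the equation becomes a linear recurrence with constant coefficients whose right-hand
  side is a combination of such sequences for \<open>v = \<mu>\<close>. Inverting one factor \<open>d\<^sub>n \<mapsto> d\<^sub>n\<^sub>+\<^sub>1 - \<lambda> d\<^sub>n\<close>
  at a time raises the admissible order \<open>k\<close> at \<open>v = \<lambda>\<close> by one: a preimage of \<open>(\<partial>/\<partial>v)\<^sup>k v\<^sup>n\<close>
  is found by induction on \<open>k\<close> when \<open>v \<noteq> \<lambda>\<close>, it is \<open>(\<partial>/\<partial>\<lambda>)\<^sup>k\<^sup>+\<^sup>1 \<lambda>\<^sup>n / (k+1)\<close> when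
  \<open>v = \<lambda>\<close>, and the kernel is spanned by \<open>\<lambda>\<^sup>n\<close>.\<close>

definition shift_sub :: "'a::comm_ring_1 \<Rightarrow> (nat \<Rightarrow> 'a) \<Rightarrow> nat \<Rightarrow> 'a" where
  "shift_sub w d n = d (Suc n) - w * d n"

section \<open>Linear difference equations with constant coefficients\<close>

text \<open>\<open>dpow k v n = (\<partial>/\<partial>v)\<^sup>k v\<^sup>n\<close>; the truncated \<open>n - k\<close> is harmless because the binomial
  vanishes for \<open>n < k\<close>.\<close>

definition dpow :: "nat \<Rightarrow> 'a::comm_semiring_1 \<Rightarrow> nat \<Rightarrow> 'a" where
  "dpow k v n = of_nat (fact k * (n choose k)) * v ^ (n - k)"

definition dpow_span :: "'a::comm_semiring_1 set \<Rightarrow> ('a \<Rightarrow> nat) \<Rightarrow> (nat \<Rightarrow> 'a) set" where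
  "dpow_span S M = {d. \<exists>A. d = (\<lambda>n. \<Sum>v\<in>S. \<Sum>k<M v. A v k * dpow k v n)}"

lemma shift_sub_eigen_dpow: "shift_sub v (dpow (Suc k) v) n = of_nat (Suc k) * dpow k v n"
proof (cases "k < n")
  case True
  then have "n - k = Suc (n - Suc k)" by simp
  then show ?thesis by (simp add: shift_sub_def dpow_def algebra_simps)
next
  case False
  then show ?thesis
    by (cases "n = k") (simp_all add: shift_sub_def dpow_def binomial_eq_0 algebra_simps)
qed

lemma shift_sub_dpow:
  "shift_sub w (dpow k v) n = (v - w) * dpow k v n + of_nat k * dpow (k - 1) v n"
proof -
  have "shift_sub w (dpow k v) n = shift_sub v (dpow k v) n + (v - w) * dpow k v n"
    by (simp add: shift_sub_def algebra_simps)
  moreover have "shift_sub v (dpow k v) n = of_nat k * dpow (k - 1) v n"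
    by (cases k) (simp_all add: shift_sub_eigen_dpow, simp add: shift_sub_def dpow_def)
  ultimately show ?thesis by simp
qed

lemma shift_sub_scale: "shift_sub w (\<lambda>n. a * f n) = (\<lambda>n. a * shift_sub w f n)"
  by (auto simp: shift_sub_def algebra_simps)

lemma shift_sub_diff: "shift_sub w (\<lambda>n. f n - g n) = (\<lambda>n. shift_sub w f n - shift_sub w g n)"
  by (auto simp: shift_sub_def algebra_simps)

lemma shift_sub_sum: "shift_sub w (\<lambda>n. \<Sum>i\<in>I. F i n) = (\<lambda>n. \<Sum>i\<in>I. shift_sub w (F i) n)"
  by (auto simp: shift_sub_def sum_subtractf sum_distrib_left)

lemma shift_sub_eq_0_imp: "shift_sub w d = (\<lambda>n. 0) \<Longrightarrow> d = (\<lambda>n. d 0 * w ^ n)"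
proof
  fix n show "shift_sub w d = (\<lambda>n. 0) \<Longrightarrow> d n = d 0 * w ^ n"
    by (induction n) (auto simp: shift_sub_def fun_eq_iff algebra_simps)
qed

lemma dpow_0: "dpow 0 v n = v ^ n"
  by (simp add: dpow_def)

lemma dpow_span_zero: "(\<lambda>n. 0) \<in> dpow_span S M"
  unfolding dpow_span_def by (intro CollectI exI[of _ "\<lambda>v k. 0"]) simp

lemma dpow_span_add:
  assumes "f \<in> dpow_span S M" "g \<in> dpow_span S M"
  shows "(\<lambda>n. f n + g n) \<in> dpow_span S M"
proof -
  obtain A B where "f = (\<lambda>n. \<Sum>v\<in>S. \<Sum>k<M v. A v k * dpow k v n)"
    "g = (\<lambda>n. \<Sum>v\<in>S. \<Sum>k<M v. B v k * dpow k v n)"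
    using assms unfolding dpow_span_def by blast
  then show ?thesis unfolding dpow_span_def
    by (intro CollectI exI[of _ "\<lambda>v k. A v k + B v k"]) (simp add: sum.distrib algebra_simps)
qed

lemma dpow_span_scale:
  assumes "f \<in> dpow_span S M"
  shows "(\<lambda>n. a * f n) \<in> dpow_span S M"
proof -
  obtain A where "f = (\<lambda>n. \<Sum>v\<in>S. \<Sum>k<M v. A v k * dpow k v n)"
    using assms unfolding dpow_span_def by blast
  then show ?thesis unfolding dpow_span_def
    by (intro CollectI exI[of _ "\<lambda>v k. a * A v k"]) (simp add: sum_distrib_left algebra_simps)
qed

lemma dpow_span_sum:
  "finite I \<Longrightarrow> (\<And>i. i \<in> I \<Longrightarrow> F i \<in> dpow_span S M) \<Longrightarrow>
    (\<lambda>n. \<Sum>i\<in>I. F i n) \<in> dpow_span S M"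
  by (induction I rule: finite_induct) (simp_all add: dpow_span_zero dpow_span_add)

lemma dpow_in_dpow_span:
  assumes "finite S" "v \<in> S" "k < M v"
  shows "dpow k v \<in> dpow_span S M"
proof -
  define A :: "'a \<Rightarrow> nat \<Rightarrow> 'a" where "A u i = (if u = v \<and> i = k then 1 else 0)" for u i
  have "(\<Sum>i<M u. A u i * dpow i u n) = (if u = v then dpow k v n else 0)" for u n
    using assms(3) by (simp add: A_def if_distrib[of "\<lambda>x. x * _"] cong: if_cong)
  then have "dpow k v n = (\<Sum>u\<in>S. \<Sum>i<M u. A u i * dpow i u n)" for n
    using assms(1,2) by simp
  then show ?thesis unfolding dpow_span_def by blast
qed

lemma dpow_span_mono:
  assumes "\<And>v. M v \<le> M' v" "d \<in> dpow_span S M"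
  shows "d \<in> dpow_span S M'"
proof -
  obtain A where A: "d = (\<lambda>n. \<Sum>v\<in>S. \<Sum>k<M v. A v k * dpow k v n)"
    using assms(2) unfolding dpow_span_def by blast
  have "(\<Sum>k<M' v. (if k < M v then A v k else 0) * dpow k v n) = (\<Sum>k<M v. A v k * dpow k v n)" for v n
    using assms(1)[of v] by (intro sum.mono_neutral_cong_right) auto
  then show ?thesis unfolding dpow_span_def A
    by (intro CollectI exI[of _ "\<lambda>v k. if k < M v then A v k else 0"]) simp
qed

lemma shift_sub_preimage_dpow_other:
  fixes v w :: "'a::field"
  assumes "finite S" "v \<in> S" "v \<noteq> w"
  shows "k < M v \<Longrightarrow> \<exists>f\<in>dpow_span S M. shift_sub w f = dpow k v"
proof (induction k)
  case 0
  have "shift_sub w (\<lambda>n. inverse (v - w) * dpow 0 v n) = dpow 0 v"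
    using assms(3) by (simp add: shift_sub_scale shift_sub_dpow[of w 0] fun_eq_iff)
  then show ?case
    using 0 assms by (intro bexI[OF _ dpow_span_scale[OF dpow_in_dpow_span]])
next
  case (Suc k)
  then obtain f where f: "f \<in> dpow_span S M" "shift_sub w f = dpow k v" by auto
  \<comment> \<open>\<open>shift_sub w\<close> maps \<open>dpow (Suc k) v\<close> to \<open>(v - w) dpow (Suc k) v + (Suc k) dpow k v\<close>;
    \<open>f\<close> cancels the second term\<close>
  define g where "g n = inverse (v - w) * (dpow (Suc k) v n - of_nat (Suc k) * f n)" for n
  have "shift_sub w g = dpow (Suc k) v"
    unfolding g_def[abs_def] shift_sub_scale shift_sub_diff
    using f(2) assms(3) by (simp add: shift_sub_dpow fun_eq_iff field_simps del: of_nat_Suc)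
  moreover have "g \<in> dpow_span S M"
    unfolding g_def[abs_def] diff_conv_add_uminus minus_mult_left
    using Suc assms f by (intro dpow_span_scale dpow_span_add dpow_in_dpow_span) auto
  ultimately show ?case by blast
qed

lemma shift_sub_preimage_dpow:
  fixes v w :: "'a::field_char_0"
  assumes "finite S" "v \<in> S" "w \<in> S" "k < M v"
  shows "\<exists>f\<in>dpow_span S (M(w := Suc (M w))). shift_sub w f = dpow k v"
proof (cases "v = w")
  case True
  have "shift_sub w (\<lambda>n. inverse (of_nat (Suc k)) * dpow (Suc k) w n) = dpow k v"
    using True by (simp add: shift_sub_scale shift_sub_eigen_dpow fun_eq_iff del: of_nat_Suc)
  then show ?thesis
    using True assms by (intro bexI[OF _ dpow_span_scale[OF dpow_in_dpow_span]]) auto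
next
  case False
  then show ?thesis
    using shift_sub_preimage_dpow_other[OF assms(1,2) False, of k M] assms(4) dpow_span_mono[of M]
    by fastforce
qed

lemma dpow_span_of_shift_sub:
  fixes w :: "'a::field_char_0"
  assumes S: "finite S" "w \<in> S" and d: "shift_sub w d \<in> dpow_span S M"
  shows "d \<in> dpow_span S (M(w := Suc (M w)))"
proof -
  let ?M' = "M(w := Suc (M w))"
  obtain A where A: "shift_sub w d = (\<lambda>n. \<Sum>v\<in>S. \<Sum>k<M v. A v k * dpow k v n)"
    using d unfolding dpow_span_def by blast
  have "\<forall>v k. \<exists>f. v \<in> S \<and> k < M v \<longrightarrow> f \<in> dpow_span S ?M' \<and> shift_sub w f = dpow k v"
    using shift_sub_preimage_dpow[OF S(1) _ S(2)] by blast
  then obtain F where F: "\<And>v k. v \<in> S \<Longrightarrow> k < M v \<Longrightarrow>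
      F v k \<in> dpow_span S ?M' \<and> shift_sub w (F v k) = dpow k v"
    by metis
  define W where "W n = (\<Sum>v\<in>S. \<Sum>k<M v. A v k * F v k n)" for n
  have W: "W \<in> dpow_span S ?M'"
    unfolding W_def[abs_def] using F S by (intro dpow_span_sum dpow_span_scale) auto
  have "shift_sub w W = shift_sub w d"
    unfolding W_def[abs_def] A shift_sub_sum shift_sub_scale using F by (auto intro!: sum.cong)
  then have "shift_sub w (\<lambda>n. d n - W n) = (\<lambda>n. 0)"
    by (simp add: shift_sub_diff)
  \<comment> \<open>the remaining freedom is the kernel of \<open>shift_sub w\<close>, spanned by \<open>dpow 0 w\<close>\<close>
  from shift_sub_eq_0_imp[OF this] have "d = (\<lambda>n. W n + (d 0 - W 0) * dpow 0 w n)"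
    by (simp add: fun_eq_iff dpow_0 algebra_simps)
  moreover have "(\<lambda>n. W n + (d 0 - W 0) * dpow 0 w n) \<in> dpow_span S ?M'"
    using W S by (intro dpow_span_add dpow_span_scale dpow_in_dpow_span) auto
  ultimately show ?thesis by simp
qed

lemma dpow_span_of_shift_sub_pow:
  fixes w :: "'a::field_char_0"
  assumes "finite S" "w \<in> S"
  shows "(shift_sub w ^^ m) d \<in> dpow_span S M \<Longrightarrow> d \<in> dpow_span S (M(w := M w + m))"
proof (induction m arbitrary: d)
  case 0
  then show ?case by simp
next
  case (Suc m)
  then have "(shift_sub w ^^ m) (shift_sub w d) \<in> dpow_span S M"
    by (simp only: funpow_Suc_right o_apply)
  then have "shift_sub w d \<in> dpow_span S (M(w := M w + m))"
    by (rule Suc.IH)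
  from dpow_span_of_shift_sub[OF assms this]
  have "d \<in> dpow_span S (M(w := M w + Suc m))" by simp
  then show ?case by (simp only: fun_upd_def)
qed

definition shift_poly ::
    "('i \<Rightarrow> 'a::comm_ring_1) \<Rightarrow> ('i \<Rightarrow> nat) \<Rightarrow> 'i list \<Rightarrow> (nat \<Rightarrow> 'a) \<Rightarrow> nat \<Rightarrow> 'a" where
  "shift_poly lam mul xs = foldr (\<lambda>l acc. (shift_sub (lam l) ^^ mul l) \<circ> acc) xs id"

lemma dpow_span_of_shift_poly:
  fixes lam :: "'i \<Rightarrow> 'a::field_char_0"
  assumes "finite S" "\<forall>l\<in>set xs. lam l \<in> S"
  shows "shift_poly lam mul xs d \<in> dpow_span S M \<Longrightarrow>
    d \<in> dpow_span S (\<lambda>v. M v + (\<Sum>l\<leftarrow>xs. if lam l = v then mul l else 0))"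
  using assms(2)
proof (induction xs arbitrary: M)
  case Nil
  then show ?case by (simp add: shift_poly_def)
next
  case (Cons x xs)
  then have "shift_poly lam mul xs d \<in> dpow_span S (M(lam x := M (lam x) + mul x))"
    using dpow_span_of_shift_sub_pow[OF assms(1)] by (simp add: shift_poly_def)
  from Cons.IH[OF this] Cons.prems(2)
  have "d \<in> dpow_span S
      (\<lambda>v. (M(lam x := M (lam x) + mul x)) v + (\<Sum>l\<leftarrow>xs. if lam l = v then mul l else 0))"
    by simp
  moreover have
    "(\<lambda>v. (M(lam x := M (lam x) + mul x)) v + (\<Sum>l\<leftarrow>xs. if lam l = v then mul l else 0))
      = (\<lambda>v. M v + (\<Sum>l\<leftarrow>x # xs. if lam l = v then mul l else 0))"
    by (auto simp: fun_eq_iff)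
  ultimately show ?case by simp
qed

section \<open>Entire power series\<close>

definition entire_coeffs :: "(nat \<Rightarrow> complex) \<Rightarrow> bool" where
  "entire_coeffs c \<longleftrightarrow> (\<forall>z. summable (\<lambda>n. c n * z ^ n))"

lemma entire_coeffs_diffs: "entire_coeffs c \<Longrightarrow> entire_coeffs (diffs c)"
  unfolding entire_coeffs_def by (intro allI termdiff_converges_all) auto

lemma entire_coeffs_diffs_funpow: "entire_coeffs c \<Longrightarrow> entire_coeffs ((diffs ^^ k) c)"
  by (induction k) (simp_all add: entire_coeffs_diffs)

lemma diffs_funpow: "(diffs ^^ k) c n = of_nat (fact k * ((n + k) choose k)) * c (n + k)"
proof (induction k arbitrary: n)
  case 0
  then show ?case by simp
next
  case (Suc k)
  have "Suc n * (Suc (n + k) choose k) = Suc k * (Suc (n + k) choose Suc k)"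
    using Suc_times_binomial_add[of k n] by (simp add: add.commute)
  then have "Suc n * (fact k * (Suc (n + k) choose k)) = fact (Suc k) * (Suc (n + k) choose Suc k)"
    by (simp only: fact_Suc of_nat_id ac_simps)
  then have coeff: "of_nat (Suc n) * of_nat (fact k * (Suc (n + k) choose k))
      = (of_nat (fact (Suc k) * (Suc (n + k) choose Suc k)) :: 'a)"
    by (simp only: of_nat_mult[symmetric])
  have "(diffs ^^ Suc k) c n = of_nat (Suc n) * (diffs ^^ k) c (Suc n)"
    by (simp only: funpow.simps(2) o_apply diffs_def[of "(diffs ^^ k) c"])
  also have "\<dots> = of_nat (fact (Suc k) * ((n + Suc k) choose Suc k)) * c (n + Suc k)"
    by (simp only: Suc.IH mult.assoc[symmetric] coeff add_Suc add_Suc_right)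
  finally show ?case .
qed

lemma deriv_funpow_powser:
  assumes "entire_coeffs c"
  shows "(deriv ^^ k) (\<lambda>s. \<Sum>n. c n * s ^ n) = (\<lambda>s. \<Sum>n. (diffs ^^ k) c n * s ^ n)"
proof (induction k)
  case 0
  then show ?case by simp
next
  case (Suc k)
  have "entire_coeffs ((diffs ^^ k) c)"
    using assms by (rule entire_coeffs_diffs_funpow)
  then have "deriv (\<lambda>s. \<Sum>n. (diffs ^^ k) c n * s ^ n) s = (\<Sum>n. diffs ((diffs ^^ k) c) n * s ^ n)" for s
    unfolding entire_coeffs_def by (intro DERIV_imp_deriv termdiffs_strong_converges_everywhere) auto
  then show ?case by (simp only: funpow.simps(2) o_apply Suc.IH)
qed

lemma sums_dpow_deriv_powser:
  assumes "entire_coeffs c"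
  shows "(\<lambda>n. c n * dpow k v n * z ^ n) sums (z ^ k * (deriv ^^ k) (\<lambda>s. \<Sum>n. c n * s ^ n) (v * z))"
proof -
  have "entire_coeffs ((diffs ^^ k) c)"
    using assms by (rule entire_coeffs_diffs_funpow)
  then have "(\<lambda>n. z ^ k * ((diffs ^^ k) c n * (v * z) ^ n))
      sums (z ^ k * (deriv ^^ k) (\<lambda>s. \<Sum>n. c n * s ^ n) (v * z))"
    unfolding deriv_funpow_powser[OF assms] entire_coeffs_def by (intro sums_mult summable_sums) auto
  moreover have "z ^ k * ((diffs ^^ k) c n * (v * z) ^ n) = c (n + k) * dpow k v (n + k) * z ^ (n + k)" for n
    by (simp add: diffs_funpow dpow_def power_add power_mult_distrib algebra_simps)
  ultimately have "(\<lambda>n. c (n + k) * dpow k v (n + k) * z ^ (n + k))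
      sums (z ^ k * (deriv ^^ k) (\<lambda>s. \<Sum>n. c n * s ^ n) (v * z))"
    by simp
  then show ?thesis
    by (subst (asm) sums_zero_iff_shift) (auto simp: dpow_def binomial_eq_0)
qed

lemma powser_coeff_0_eq_0_if_zero_on_pos:
  assumes "entire_coeffs a" "\<And>t. t > 0 \<Longrightarrow> (\<Sum>n. a n * complex_of_real t ^ n) = 0"
  shows "a 0 = 0"
proof -
  let ?f = "\<lambda>z. \<Sum>n. a n * z ^ n"
  have "((\<lambda>t. ?f (complex_of_real t)) \<longlongrightarrow> ?f 0) (at_right 0)"
    using assms(1) unfolding entire_coeffs_def
    by (intro isCont_tendsto_compose[OF isCont_powser_converges_everywhere] tendsto_eq_intros) auto
  moreover have "eventually (\<lambda>t. ?f (complex_of_real t) = 0) (at_right 0)"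
    by (rule eventually_mono[OF eventually_at_right_less]) (rule assms(2))
  ultimately have "((\<lambda>t. 0) \<longlongrightarrow> ?f 0) (at_right (0::real))"
    by (rule Lim_transform_eventually)
  then have "?f 0 = 0"
    using tendsto_unique[OF trivial_limit_at_right_real] tendsto_const by metis
  then show ?thesis by simp
qed

lemma powser_coeff_eq_0_if_zero_on_pos:
  "entire_coeffs a \<Longrightarrow> (\<And>t. t > 0 \<Longrightarrow> (\<Sum>n. a n * complex_of_real t ^ n) = 0) \<Longrightarrow> a k = 0"
proof (induction k arbitrary: a)
  case 0
  then show ?case by (rule powser_coeff_0_eq_0_if_zero_on_pos)
next
  case (Suc k)
  have a0: "a 0 = 0" using powser_coeff_0_eq_0_if_zero_on_pos Suc.prems by blast
  have "entire_coeffs (\<lambda>n. a (Suc n))"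
    using Suc.prems(1) unfolding entire_coeffs_def by (auto intro: powser_split_head(3))
  moreover have "(\<Sum>n. a (Suc n) * complex_of_real t ^ n) = 0" if "t > 0" for t
    using powser_split_head(2)[of a "complex_of_real t"] Suc.prems that a0
    unfolding entire_coeffs_def by simp
  ultimately show ?case by (rule Suc.IH)
qed

lemma powser_coeffs_eq_if_eq_on_pos:
  assumes "entire_coeffs a" "entire_coeffs b"
    and "\<And>t. t > 0 \<Longrightarrow> (\<Sum>n. a n * complex_of_real t ^ n) = (\<Sum>n. b n * complex_of_real t ^ n)"
  shows "a = b"
proof -
  have "entire_coeffs (\<lambda>n. a n - b n)"
    using assms(1,2) unfolding entire_coeffs_def left_diff_distrib by (simp add: summable_diff)
  moreover have "(\<Sum>n. (a n - b n) * complex_of_real t ^ n) = 0" if "t > 0" for t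
    using assms that unfolding entire_coeffs_def left_diff_distrib by (subst suminf_diff[symmetric]) auto
  ultimately have "a n - b n = 0" for n
    by (rule powser_coeff_eq_0_if_zero_on_pos)
  then show ?thesis by auto
qed

section \<open>The coefficients of \<open>E\<^sub>\<alpha>\<close> and the operator \<open>LD\<^sup>\<alpha>\<close>\<close>

definition LD_factor :: "real \<Rightarrow> nat \<Rightarrow> real" where
  "LD_factor \<alpha> n = Gamma (real n + 2) * Gamma (2 - \<alpha>) / Gamma (real n + 2 - \<alpha>)"

lemma LD_eq_LD_factor: "LD \<alpha> c n = c (Suc n) * complex_of_real (LD_factor \<alpha> n)"
  unfolding LD_def LD_factor_def by simp

context
  fixes \<alpha> :: real
  assumes \<alpha>_pos: "0 < \<alpha>" and \<alpha>_less_1: "\<alpha> < 1"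
begin

lemma Ecoef_pos: "Ecoef \<alpha> n > 0"
  unfolding Ecoef_def using \<alpha>_pos \<alpha>_less_1
  by (intro divide_pos_pos mult_pos_pos zero_less_power prod_pos) auto

lemma Ecoef_Suc: "Ecoef \<alpha> (Suc n) * LD_factor \<alpha> n = Ecoef \<alpha> n"
proof -
  define G where "G = Gamma (2 - \<alpha>)"
  define R where "R = Gamma (real n + 2) / Gamma (real n + 2 - \<alpha>)"
  define P where "P = (\<Prod>j\<in>{1..n}. Gamma (real j + 1) / Gamma (real j + 1 - \<alpha>))"
  have pos: "G > 0" "R > 0" "P > 0"
    unfolding G_def R_def P_def using \<alpha>_less_1 by (auto intro!: prod_pos)
  have "(\<Prod>j\<in>{1..Suc n}. Gamma (real j + 1) / Gamma (real j + 1 - \<alpha>)) = R * P"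
    unfolding R_def P_def by (subst prod.nat_ivl_Suc') (auto simp: add_ac)
  then have "Ecoef \<alpha> (Suc n) = 1 / (G ^ Suc n * (R * P))"
    unfolding Ecoef_def G_def by simp
  moreover have "Ecoef \<alpha> n = 1 / (G ^ n * P)"
    unfolding Ecoef_def G_def P_def by simp
  moreover have "LD_factor \<alpha> n = R * G"
    unfolding LD_factor_def R_def G_def by simp
  ultimately show ?thesis using pos by simp
qed

lemma LD_factor_0: "LD_factor \<alpha> 0 = 1"
proof -
  have "Gamma (2::real) = 1" using Gamma_numeral[of "num.Bit0 num.One"] by simp
  moreover have "Gamma (2 - \<alpha>) > 0" using \<alpha>_less_1 by (intro Gamma_real_pos) simp
  ultimately show ?thesis by (simp add: LD_factor_def)
qed

lemma LD_factor_Suc: "LD_factor \<alpha> (Suc n) = LD_factor \<alpha> n * ((real n + 2) / (real n + 2 - \<alpha>))"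
proof -
  have "Gamma (real n + 2 + 1) = (real n + 2) * Gamma (real n + 2)"
    by (rule Gamma_plus1) (auto dest: nonpos_Ints_nonpos)
  moreover have "Gamma (real n + 2 - \<alpha> + 1) = (real n + 2 - \<alpha>) * Gamma (real n + 2 - \<alpha>)"
    using \<alpha>_less_1 by (intro Gamma_plus1) (auto dest: nonpos_Ints_nonpos)
  moreover have "Gamma (real n + 2 - \<alpha>) > 0" "real n + 2 - \<alpha> > 0"
    using \<alpha>_less_1 by auto
  ultimately show ?thesis
    unfolding LD_factor_def by (simp add: field_simps add_ac)
qed

lemma LD_factor_bounds: "1 \<le> LD_factor \<alpha> n \<and> LD_factor \<alpha> n \<le> real n + 1"
proof (induction n)
  case 0
  then show ?case by (simp add: LD_factor_0)
next
  case (Suc n)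
  have pos: "real n + 2 - \<alpha> > 0" using \<alpha>_less_1 by simp
  have q: "1 \<le> (real n + 2) / (real n + 2 - \<alpha>)" "(real n + 1) / (real n + 2 - \<alpha>) \<le> 1"
    using \<alpha>_pos \<alpha>_less_1 pos by (simp_all add: le_divide_eq divide_le_eq)
  have "LD_factor \<alpha> n \<le> LD_factor \<alpha> (Suc n)"
    unfolding LD_factor_Suc using Suc q by (intro mult_le_cancel_left1[THEN iffD2]) auto
  moreover have "LD_factor \<alpha> (Suc n) \<le> (real n + 1) * ((real n + 2) / (real n + 2 - \<alpha>))"
    unfolding LD_factor_Suc using Suc q(1) by (intro mult_right_mono) auto
  moreover have "(real n + 1) * ((real n + 2) / (real n + 2 - \<alpha>)) \<le> real n + 2"
    using mult_left_le[OF q(2), of "real n + 2"] by (simp add: field_simps)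
  ultimately show ?case using Suc by simp
qed

lemma LD_factor_ge_harm: "LD_factor \<alpha> n \<ge> 1 - \<alpha> + \<alpha> * harm (Suc n)"
proof (induction n)
  case 0
  then show ?case by (simp add: LD_factor_0 harm_def)
next
  case (Suc n)
  have pos: "real n + 2 - \<alpha> > 0" using \<alpha>_less_1 by simp
  have "LD_factor \<alpha> (Suc n) = LD_factor \<alpha> n + LD_factor \<alpha> n * (\<alpha> / (real n + 2 - \<alpha>))"
    unfolding LD_factor_Suc using pos by (simp add: field_simps)
  moreover have "\<alpha> / (real n + 2) \<le> LD_factor \<alpha> n * (\<alpha> / (real n + 2 - \<alpha>))"
  proof -
    have "\<alpha> / (real n + 2) \<le> \<alpha> / (real n + 2 - \<alpha>)"
      using \<alpha>_pos pos by (intro divide_left_mono) auto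
    also have "\<dots> \<le> LD_factor \<alpha> n * (\<alpha> / (real n + 2 - \<alpha>))"
      using mult_right_mono[of 1 "LD_factor \<alpha> n" "\<alpha> / (real n + 2 - \<alpha>)"] LD_factor_bounds[of n] \<alpha>_pos pos
      by simp
    finally show ?thesis .
  qed
  moreover have "harm (Suc (Suc n)) = harm (Suc n) + 1 / (real n + 2)"
    by (simp add: harm_Suc[of "Suc n"] divide_inverse add_ac)
  ultimately show ?case using Suc by (simp add: algebra_simps)
qed

lemma LD_factor_at_top: "filterlim (LD_factor \<alpha>) at_top sequentially"
proof (rule filterlim_at_top_mono[OF _ always_eventually[OF allI[OF LD_factor_ge_harm]]])
  show "filterlim (\<lambda>n. 1 - \<alpha> + \<alpha> * harm (Suc n)) at_top sequentially"
    using \<alpha>_pos by (intro filterlim_tendsto_add_at_top[OF tendsto_const]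
        filterlim_tendsto_pos_mult_at_top[OF tendsto_const] filterlim_compose[OF harm_at_top filterlim_Suc])
qed

lemma entire_coeffs_Ecoef: "entire_coeffs (\<lambda>n. complex_of_real (Ecoef \<alpha> n))"
  unfolding entire_coeffs_def
proof
  fix z :: complex
  obtain N where N: "\<And>n. n \<ge> N \<Longrightarrow> 2 * norm z \<le> LD_factor \<alpha> n"
    using LD_factor_at_top unfolding filterlim_at_top eventually_sequentially by blast
  show "summable (\<lambda>n. complex_of_real (Ecoef \<alpha> n) * z ^ n)"
  proof (rule summable_ratio_test[of "1/2" N])
    fix n assume "n \<ge> N"
    have pos: "LD_factor \<alpha> n > 0" "Ecoef \<alpha> n > 0" "Ecoef \<alpha> (Suc n) > 0"
      using LD_factor_bounds[of n] Ecoef_pos by (auto intro: less_le_trans)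
    have "Ecoef \<alpha> (Suc n) * norm z \<le> Ecoef \<alpha> (Suc n) * LD_factor \<alpha> n / 2"
      using N[OF \<open>n \<ge> N\<close>] pos by simp
    also have "\<dots> = Ecoef \<alpha> n / 2"
      using Ecoef_Suc[of n] by simp
    finally have "Ecoef \<alpha> (Suc n) * norm z \<le> Ecoef \<alpha> n / 2" .
    from mult_right_mono[OF this, of "norm z ^ n"]
    show "norm (complex_of_real (Ecoef \<alpha> (Suc n)) * z ^ Suc n)
        \<le> 1/2 * norm (complex_of_real (Ecoef \<alpha> n) * z ^ n)"
      using pos
      by (simp add: norm_mult norm_power algebra_simps)
  qed simp
qed

lemma entire_coeffs_LD:
  assumes "entire_coeffs c"
  shows "entire_coeffs (LD \<alpha> c)"
  unfolding entire_coeffs_def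
proof
  fix z :: complex
  \<comment> \<open>\<open>LD\<close> is dominated by the formal derivative \<open>diffs\<close>, since \<open>LD_factor \<alpha> n \<le> n + 1\<close>\<close>
  have "summable (\<lambda>n. diffs c n * x ^ n)" for x
    using assms unfolding entire_coeffs_def by (intro termdiff_converges_all) auto
  then have "summable (\<lambda>n. norm (diffs c n * z ^ n))"
    by (rule powser_insidea[where x = "of_real (norm z + 1)"]) simp
  then show "summable (\<lambda>n. LD \<alpha> c n * z ^ n)"
  proof (rule summable_comparison_test'[where N=0])
    fix n
    have "norm (LD \<alpha> c n * z ^ n) = norm (c (Suc n)) * LD_factor \<alpha> n * norm z ^ n"
      using LD_factor_bounds[of n] by (simp add: LD_eq_LD_factor norm_mult norm_power)
    also have "\<dots> \<le> norm (c (Suc n)) * (real n + 1) * norm z ^ n"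
      using LD_factor_bounds[of n] by (intro mult_right_mono mult_left_mono) auto
    also have "\<dots> = norm (diffs c n * z ^ n)"
      using norm_of_nat[where 'a=complex, of "Suc n"]
      by (simp add: diffs_def norm_mult norm_power add.commute del: of_nat_Suc)
    finally show "norm (LD \<alpha> c n * z ^ n) \<le> norm (diffs c n * z ^ n)" .
  qed
qed

lemma entire_coeffs_LD_shift: "entire_coeffs c \<Longrightarrow> entire_coeffs (LD_shift \<alpha> w c)"
  using entire_coeffs_LD unfolding entire_coeffs_def LD_shift_def
  by (simp add: left_diff_distrib mult.assoc summable_diff summable_mult)

lemma entire_coeffs_LD_poly: "entire_coeffs c \<Longrightarrow> entire_coeffs (LD_poly \<alpha> lam mul r c)"
proof -
  have "entire_coeffs c \<Longrightarrow> entire_coeffs ((LD_shift \<alpha> w ^^ m) c)" for c w m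
    by (induction m) (simp_all add: entire_coeffs_LD_shift)
  then have "entire_coeffs c \<Longrightarrow>
      entire_coeffs (foldr (\<lambda>l acc. (LD_shift \<alpha> (lam l) ^^ mul l) \<circ> acc) xs id c)" for xs c
    by (induction xs arbitrary: c) simp_all
  then show "entire_coeffs c \<Longrightarrow> entire_coeffs (LD_poly \<alpha> lam mul r c)"
    unfolding LD_poly_def .
qed

lemma LD_shift_Ecoef_mult:
  "LD_shift \<alpha> z (\<lambda>n. complex_of_real (Ecoef \<alpha> n) * d n)
    = (\<lambda>n. complex_of_real (Ecoef \<alpha> n) * shift_sub z d n)"
proof -
  have "complex_of_real (Ecoef \<alpha> (Suc n)) * complex_of_real (LD_factor \<alpha> n) = complex_of_real (Ecoef \<alpha> n)" for n
    by (metis Ecoef_Suc of_real_mult)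
  then show ?thesis
    by (simp add: LD_shift_def LD_eq_LD_factor shift_sub_def fun_eq_iff algebra_simps)
qed

lemma LD_poly_Ecoef_mult:
  "LD_poly \<alpha> lam mul r (\<lambda>n. complex_of_real (Ecoef \<alpha> n) * d n)
    = (\<lambda>n. complex_of_real (Ecoef \<alpha> n) * shift_poly lam mul [0..<r] d n)"
proof -
  have pow: "(LD_shift \<alpha> z ^^ m) (\<lambda>n. complex_of_real (Ecoef \<alpha> n) * d n)
      = (\<lambda>n. complex_of_real (Ecoef \<alpha> n) * (shift_sub z ^^ m) d n)" for z m d
    by (induction m) (simp_all add: LD_shift_Ecoef_mult)
  have "foldr (\<lambda>l acc. (LD_shift \<alpha> (lam l) ^^ mul l) \<circ> acc) xs id (\<lambda>n. complex_of_real (Ecoef \<alpha> n) * d n)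
      = (\<lambda>n. complex_of_real (Ecoef \<alpha> n) * shift_poly lam mul xs d n)" for xs
    by (induction xs) (simp_all add: shift_poly_def pow)
  then show ?thesis unfolding LD_poly_def .
qed

lemma sums_Ealpha_deriv:
  "(\<lambda>n. complex_of_real (Ecoef \<alpha> n) * dpow k v n * z ^ n) sums (z ^ k * Ealpha_deriv \<alpha> k (v * z))"
  using sums_dpow_deriv_powser[OF entire_coeffs_Ecoef]
  by (simp add: Ealpha_deriv_def Ealpha_def[abs_def])

lemma LD_poly_solution_coeffs:
  assumes "entire_coeffs c"
    and "\<forall>t\<ge>0. ps_fun (LD_poly \<alpha> lam mul r c) t =
            (\<Sum>j\<le>J. \<beta> j * complex_of_real t ^ j * Ealpha_deriv \<alpha> j (\<mu> * complex_of_real t))"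
  shows "shift_poly lam mul [0..<r] (\<lambda>n. c n / complex_of_real (Ecoef \<alpha> n))
    = (\<lambda>n. \<Sum>j\<le>J. \<beta> j * dpow j \<mu> n)"
proof -
  define e where "e n = complex_of_real (Ecoef \<alpha> n)" for n
  have e_nz: "e n \<noteq> 0" for n
    using Ecoef_pos[of n] by (simp add: e_def)
  define F where "F n = e n * (\<Sum>j\<le>J. \<beta> j * dpow j \<mu> n)" for n
  have F_sums: "(\<lambda>n. F n * z ^ n) sums (\<Sum>j\<le>J. \<beta> j * z ^ j * Ealpha_deriv \<alpha> j (\<mu> * z))" for z
  proof -
    have "(\<lambda>n. \<Sum>j\<le>J. \<beta> j * (e n * dpow j \<mu> n * z ^ n))
        sums (\<Sum>j\<le>J. \<beta> j * (z ^ j * Ealpha_deriv \<alpha> j (\<mu> * z)))"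
      unfolding e_def by (intro sums_sum sums_mult sums_Ealpha_deriv)
    then show ?thesis
      by (simp add: F_def sum_distrib_left sum_distrib_right mult.assoc mult.left_commute)
  qed
  have "LD_poly \<alpha> lam mul r c = F"
  proof (rule powser_coeffs_eq_if_eq_on_pos)
    show "entire_coeffs (LD_poly \<alpha> lam mul r c)"
      using assms(1) by (rule entire_coeffs_LD_poly)
    show "entire_coeffs F"
      unfolding entire_coeffs_def using F_sums sums_summable by blast
    fix t :: real assume "t > 0"
    then show "(\<Sum>n. LD_poly \<alpha> lam mul r c n * complex_of_real t ^ n) = (\<Sum>n. F n * complex_of_real t ^ n)"
      using assms(2) sums_unique[OF F_sums] unfolding ps_fun_def by simp
  qed
  moreover have "LD_poly \<alpha> lam mul r c = (\<lambda>n. e n * shift_poly lam mul [0..<r] (\<lambda>n. c n / e n) n)"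
    using LD_poly_Ecoef_mult[of lam mul r "\<lambda>n. c n / e n"] e_nz unfolding e_def by simp
  ultimately show ?thesis
    using e_nz by (simp add: F_def e_def fun_eq_iff)
qed

lemma ps_fun_eq_Ealpha_deriv_combination:
  assumes "finite S" "(\<lambda>n. c n / complex_of_real (Ecoef \<alpha> n)) \<in> dpow_span S M"
  shows "\<exists>A. \<forall>t. ps_fun c t =
    (\<Sum>v\<in>S. \<Sum>k<M v. A v k * complex_of_real t ^ k * Ealpha_deriv \<alpha> k (v * complex_of_real t))"
proof -
  obtain A where A: "(\<lambda>n. c n / complex_of_real (Ecoef \<alpha> n)) = (\<lambda>n. \<Sum>v\<in>S. \<Sum>k<M v. A v k * dpow k v n)"
    using assms(2) unfolding dpow_span_def by blast
  have c_eq: "c n = (\<Sum>v\<in>S. \<Sum>k<M v. A v k * (complex_of_real (Ecoef \<alpha> n) * dpow k v n))" for n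
    using fun_cong[OF A, of n] Ecoef_pos[of n]
    by (simp add: field_simps sum_distrib_left sum_distrib_right)
  have "(\<lambda>n. c n * z ^ n) sums (\<Sum>v\<in>S. \<Sum>k<M v. A v k * z ^ k * Ealpha_deriv \<alpha> k (v * z))" for z
  proof -
    have "(\<lambda>n. \<Sum>v\<in>S. \<Sum>k<M v. A v k * (complex_of_real (Ecoef \<alpha> n) * dpow k v n * z ^ n))
        sums (\<Sum>v\<in>S. \<Sum>k<M v. A v k * (z ^ k * Ealpha_deriv \<alpha> k (v * z)))"
      by (intro sums_sum sums_mult sums_Ealpha_deriv)
    then show ?thesis
      by (simp add: c_eq sum_distrib_right mult.assoc)
  qed
  then show ?thesis
    unfolding ps_fun_def by (blast intro: sums_unique[symmetric])
qed

end

lemma entire_coeffs_if_ps_conv: "ps_conv c \<Longrightarrow> entire_coeffs c"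
  unfolding ps_conv_def entire_coeffs_def
proof
  fix z :: complex
  assume "\<forall>t\<ge>0. summable (\<lambda>n. c n * complex_of_real t ^ n)"
  then have "summable (\<lambda>n. c n * complex_of_real (norm z + 1) ^ n)"
    by (metis add_nonneg_nonneg norm_ge_zero zero_le_one)
  then show "summable (\<lambda>n. c n * z ^ n)" by (rule powser_inside) simp
qed

lemma sum_if_lam_eq:
  fixes lam :: "nat \<Rightarrow> 'b"
  assumes "inj_on lam {..<r}" "l' < r"
  shows "(\<Sum>l<r. if lam l = lam l' then mul l else (0::nat)) = mul l'"
proof -
  have "(\<Sum>l<r. if lam l = lam l' then mul l else (0::nat)) = (\<Sum>l<r. if l = l' then mul l else 0)"
    using assms by (intro sum.cong) (auto dest: inj_onD)
  then show ?thesis using assms(2) by simp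
qed

lemma sum_multiplicities_nonresonant:
  fixes lam :: "nat \<Rightarrow> 'b" and f :: "'b \<Rightarrow> nat \<Rightarrow> 'a::comm_monoid_add"
  assumes "inj_on lam {..<r}" "\<mu> \<notin> lam ` {..<r}"
  shows "(\<Sum>v\<in>insert \<mu> (lam ` {..<r}).
      \<Sum>k<(if v = \<mu> then Suc J else 0) + (\<Sum>l<r. if lam l = v then mul l else 0). f v k)
    = (\<Sum>l<r. \<Sum>k<mul l. f (lam l) k) + (\<Sum>k\<le>J. f \<mu> k)"
proof -
  have "(\<Sum>l<r. if lam l = \<mu> then mul l else 0) = 0"
    using assms(2) by (intro sum.neutral) auto
  moreover have "(\<Sum>v\<in>lam ` {..<r}.
        \<Sum>k<(if v = \<mu> then Suc J else 0) + (\<Sum>l<r. if lam l = v then mul l else 0). f v k)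
      = (\<Sum>l<r. \<Sum>k<mul l. f (lam l) k)"
    using assms by (auto simp: sum.reindex sum_if_lam_eq intro!: sum.cong)
  ultimately show ?thesis
    using assms(2) by (simp add: lessThan_Suc_atMost add.commute)
qed

lemma sum_multiplicities_resonant:
  fixes lam :: "nat \<Rightarrow> 'b" and f :: "'b \<Rightarrow> nat \<Rightarrow> 'a::comm_monoid_add"
  assumes "inj_on lam {..<r}" "l0 < r"
  shows "(\<Sum>v\<in>lam ` {..<r}.
      \<Sum>k<(if v = lam l0 then Suc J else 0) + (\<Sum>l<r. if lam l = v then mul l else 0). f v k)
    = (\<Sum>l\<in>{..<r} - {l0}. \<Sum>k<mul l. f (lam l) k) + (\<Sum>k\<le>J + mul l0. f (lam l0) k)"
proof -
  let ?g = "\<lambda>l. \<Sum>k<(if l = l0 then Suc J else 0) + mul l. f (lam l) k"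
  have "(\<Sum>v\<in>lam ` {..<r}.
      \<Sum>k<(if v = lam l0 then Suc J else 0) + (\<Sum>l<r. if lam l = v then mul l else 0). f v k)
      = (\<Sum>l<r. ?g l)"
    using assms by (auto simp: sum.reindex sum_if_lam_eq inj_on_eq_iff intro!: sum.cong)
  also have "\<dots> = ?g l0 + (\<Sum>l\<in>{..<r} - {l0}. ?g l)"
    using assms(2) by (intro sum.remove) auto
  also have "(\<Sum>l\<in>{..<r} - {l0}. ?g l) = (\<Sum>l\<in>{..<r} - {l0}. \<Sum>k<mul l. f (lam l) k)"
    by (intro sum.cong) auto
  finally show ?thesis
    by (simp add: lessThan_Suc_atMost add.commute)
qed

theorem mainTheorem19:
  fixes \<alpha> :: real and r :: nat and lam :: "nat \<Rightarrow> complex" and mul :: "nat \<Rightarrow> nat"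
    and J :: nat and \<beta> :: "nat \<Rightarrow> complex" and \<mu> :: complex
    and c :: "nat \<Rightarrow> complex"
  assumes "0 < \<alpha>" "\<alpha> < 1"
    and "r \<ge> 1"
    and "inj_on lam {..<r}"
    and "\<forall>l<r. mul l \<ge> 1"
    and "ps_conv c"
    and "\<forall>t\<ge>0. ps_fun (LD_poly \<alpha> lam mul r c) t =
            (\<Sum>j\<le>J. \<beta> j * complex_of_real t ^ j * Ealpha_deriv \<alpha> j (\<mu> * complex_of_real t))"
  shows "((\<forall>l<r. \<mu> \<noteq> lam l) \<longrightarrow>
          (\<exists>a :: nat \<Rightarrow> nat \<Rightarrow> complex. \<exists>b :: nat \<Rightarrow> complex. \<forall>t\<ge>0.
             ps_fun c t =
               (\<Sum>l<r. \<Sum>k<mul l. a l k * complex_of_real t ^ k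
                    * Ealpha_deriv \<alpha> k (lam l * complex_of_real t))
             + (\<Sum>j\<le>J. b j * complex_of_real t ^ j
                    * Ealpha_deriv \<alpha> j (\<mu> * complex_of_real t))))
       \<and> (\<forall>l0<r. \<mu> = lam l0 \<longrightarrow>
          (\<exists>a :: nat \<Rightarrow> nat \<Rightarrow> complex. \<exists>b :: nat \<Rightarrow> complex. \<forall>t\<ge>0.
             ps_fun c t =
               (\<Sum>l\<in>{..<r} - {l0}. \<Sum>k<mul l. a l k * complex_of_real t ^ k
                    * Ealpha_deriv \<alpha> k (lam l * complex_of_real t))
             + (\<Sum>k\<le>J + mul l0. b k * complex_of_real t ^ k
                    * Ealpha_deriv \<alpha> k (lam l0 * complex_of_real t))))"
proof -
  define S where "S = insert \<mu> (lam ` {..<r})"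
  define M where "M = (\<lambda>v. (if v = \<mu> then Suc J else 0) + (\<Sum>l<r. if lam l = v then mul l else 0))"
  have "finite S" by (simp add: S_def)
  have "shift_poly lam mul [0..<r] (\<lambda>n. c n / complex_of_real (Ecoef \<alpha> n))
      \<in> dpow_span S (\<lambda>v. if v = \<mu> then Suc J else 0)"
    unfolding LD_poly_solution_coeffs[OF assms(1,2) entire_coeffs_if_ps_conv[OF assms(6)] assms(7)]
    using \<open>finite S\<close> by (intro dpow_span_sum dpow_span_scale dpow_in_dpow_span) (auto simp: S_def)
  from dpow_span_of_shift_poly[OF \<open>finite S\<close> _ this]
  have "(\<lambda>n. c n / complex_of_real (Ecoef \<alpha> n)) \<in> dpow_span S M"
    by (simp add: S_def M_def interv_sum_list_conv_sum_set_nat atLeast0LessThan)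
  then obtain A where A: "\<And>t. ps_fun c t =
      (\<Sum>v\<in>S. \<Sum>k<M v. A v k * complex_of_real t ^ k * Ealpha_deriv \<alpha> k (v * complex_of_real t))"
    using ps_fun_eq_Ealpha_deriv_combination[OF assms(1,2) \<open>finite S\<close>] by blast
  have nonresonant: "\<mu> \<notin> lam ` {..<r}" if "\<forall>l<r. \<mu> \<noteq> lam l"
    using that by auto
  show ?thesis
    unfolding A S_def M_def
    by (intro conjI allI impI exI[of _ "\<lambda>l. A (lam l)"] exI[of _ "A \<mu>"])
      (simp_all add: sum_multiplicities_nonresonant[OF assms(4) nonresonant]
        sum_multiplicities_resonant[OF assms(4)])
qed

end
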